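(* For every $0\le t\le T-1$, the set $\mathrm{graph}(\overline{\mathcal P}^{\mathrm{int}}_t):=\{(\bar\omega,\overline{\mathbb P}):\bar\omega\in\overline\Omega_t,\ \overline{\mathbb P}\in\overline{\mathcal P}^{\mathrm{int}}_t(\bar\omega)\}\subseteq \overline\Omega_t\times\mathfrak B(\Omega_1\times\Lambda_1)$ is analytic.
   Context: Setting: Fix integers $T\ge1$, $d\ge2$. $\Omega_0=\{\omega_0\}$, $\Omega_1$ is a Polish space, $\Omega_t:=\Omega_0\times\Omega_1^t$ ($t\le T$), $\Omega:=\Omega_T$; write $\omega^t=(\omega_0,\dots,\omega_t)$. $\mathcal F^0_t:=\mathcal B(\Omega_t)$, $\mathcal F_t$ its universal completion. $\mathfrak B(E)$ denotes the set of Borel probability measures on a Polish space $E$. For $t\le T-1$ and $\omega\in\Omega_t$, $\mathcal P_t(\omega)\subseteq\mathfrak B(\Omega_1)$ is nonempty convex, and $\{(\omega,\mathbb P):\mathbb P\in\mathcal P_t(\omega)\}\subseteq\Omega_t\times\mathfrak B(\Omega_1)$ is analytic. For each $t$, $K_t$ is an $\mathcal F^0_t$-measurable random closed convex cone containing $\mathbb R^d_+$, $K^*_t$ its dual cone $\{y:\langle x,y\rangle\ge0\ \forall x\in K_t\}$, $K^{*,0}_t:=\{y\in K^*_t:y^d=1\}$, with $K^*_t\cap\partial\mathbb R^d_+=\{0\}$ and $\mathrm{int}K^*_t\ne\emptyset$ everywhere; $S$ is $\mathbb F^0$-adapted with $S_t\in K^{*,0}_t\cap\mathrm{int}K^*_t$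 everywhere, and there is $c>1$ with $c^{-1}S^i_t\le y^i\le cS^i_t$ for all $i\le d-1$, $y\in K^{*,0}_t$. Enlargement: $\Lambda_1:=[c^{-1},c]^{d-1}$, $\overline\Omega_0:=\Omega_0\times\Lambda_1$, $\overline\Omega_t:=\overline\Omega_0\times(\Omega_1\times\Lambda_1)^t$, elements $\bar\omega^t=(\omega^t,\theta^t)$ with $\theta^t=(\theta_0,\dots,\theta_t)$. $X_t(\omega,\theta):=\Pi_{K^{*,0}_t(\omega^t)}[S_t(\omega^t)\theta_t]$ (Euclidean projection), where $S_t\theta_t:=(S^1_t\theta^1_t,\dots,S^{d-1}_t\theta^{d-1}_t,S^d_t)$; it is viewed as a function on $\overline\Omega_t$. For $t\le T-1$ and $\bar\omega=(\omega,\theta)\in\overline\Omega_t$: $\overline{\mathcal P}_t(\bar\omega):=\{\overline{\mathbb P}\in\mathfrak B(\Omega_1\times\Lambda_1):\overline{\mathbb P}|_{\Omega_1}\in\mathcal P_t(\omega)\}$ and $\overline{\mathcal P}^{\mathrm{int}}_t(\bar\omega):=\{\overline{\mathbb P}\in\overline{\mathcal P}_t(\bar\omega):(\delta_{\bar\omega}\otimes\overline{\mathbb P})[X_{t+1}\in\mathrm{int}K^*_{t+1}]=1\}$, where $\delta_{\bar\omega}\otimes\overline{\mathbb P}\in\mathfrak B(\overline\Omega_{t+1})$. *)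

theory Defs
  imports "HOL-Probability.Probability"
begin

definition baire_measure :: "(nat \<Rightarrow> nat) measure" where
  "baire_measure = PiM UNIV (\<lambda>_. count_space UNIV)"

definition analytic_set :: "'a measure \<Rightarrow> 'a set \<Rightarrow> bool" where
  "analytic_set M A \<longleftrightarrow> (\<exists>B \<in> sets (M \<Otimes>\<^sub>M baire_measure). A = fst ` B)"

text \<open>Omega_t = Omega_0 x Omega_1^t; Omega_0 is a singleton and is dropped:
  a path is an (extensional) function on {1..t}.\<close>
definition path_space :: "nat \<Rightarrow> (nat \<Rightarrow> 'w::topological_space) measure" where
  "path_space t = PiM {1..t} (\<lambda>_. borel)"

definition mix_measure :: "real \<Rightarrow> 'a measure \<Rightarrow> 'a measure \<Rightarrow> 'a measure" where
  "mix_measure l P Q = measure_of (space P) (sets P)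
     (\<lambda>A. ennreal l * emeasure P A + ennreal (1 - l) * emeasure Q A)"

definition dual_cone :: "(real ^ 'd) set \<Rightarrow> (real ^ 'd) set" where
  "dual_cone K = {y. \<forall>x\<in>K. 0 \<le> inner x y}"

definition nonneg_orthant :: "(real ^ 'd) set" where
  "nonneg_orthant = {x. \<forall>i. 0 \<le> x $ i}"

definition Kstar0 :: "'d \<Rightarrow> (real ^ 'd) set \<Rightarrow> (real ^ 'd) set" where
  "Kstar0 e K = {y \<in> dual_cone K. y $ e = 1}"

definition effros_measurable :: "'a measure \<Rightarrow> ('a \<Rightarrow> ('b::topological_space) set) \<Rightarrow> bool" where
  "effros_measurable M K \<longleftrightarrow> (\<forall>U. open U \<longrightarrow> {\<omega> \<in> space M. K \<omega> \<inter> U \<noteq> {}} \<in> sets M)"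

text \<open>Lambda_1 = [1/c, c]^(d-1), represented as the vectors theta in R^d with
  theta_e = 1 and theta_i in [1/c, c] for i \<noteq> e.\<close>
definition Lambda1 :: "'d \<Rightarrow> real \<Rightarrow> (real ^ 'd) set" where
  "Lambda1 e c = {\<theta>. \<theta> $ e = 1 \<and> (\<forall>i. i \<noteq> e \<longrightarrow> \<theta> $ i \<in> {1/c..c})}"

definition Lambda_measure :: "'d \<Rightarrow> real \<Rightarrow> (real ^ 'd) measure" where
  "Lambda_measure e c = restrict_space borel (Lambda1 e c)"

definition enl_space :: "'d \<Rightarrow> real \<Rightarrow> nat \<Rightarrow> ((nat \<Rightarrow> 'w::topological_space) \<times> (nat \<Rightarrow> real ^ 'd)) measure" where
  "enl_space e c t = path_space t \<Otimes>\<^sub>M PiM {0..t} (\<lambda>_. Lambda_measure e c)"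

definition step_space :: "'d \<Rightarrow> real \<Rightarrow> ('w::topological_space \<times> (real ^ 'd)) measure" where
  "step_space e c = (borel :: 'w measure) \<Otimes>\<^sub>M Lambda_measure e c"

definition concat_path :: "nat \<Rightarrow> (nat \<Rightarrow> 'w) \<times> (nat \<Rightarrow> 'v) \<Rightarrow> 'w \<times> 'v \<Rightarrow> (nat \<Rightarrow> 'w) \<times> (nat \<Rightarrow> 'v)" where
  "concat_path t wb z = ((fst wb)(Suc t := fst z), (snd wb)(Suc t := snd z))"

text \<open>delta_{omega-bar} (x) P-bar as a measure on Omega-bar_{t+1}.\<close>
definition dirac_prod :: "'d \<Rightarrow> real \<Rightarrow> nat \<Rightarrow> (nat \<Rightarrow> 'w::topological_space) \<times> (nat \<Rightarrow> real ^ 'd)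
    \<Rightarrow> ('w \<times> (real ^ 'd)) measure \<Rightarrow> ((nat \<Rightarrow> 'w) \<times> (nat \<Rightarrow> real ^ 'd)) measure" where
  "dirac_prod e c t wb Pb = distr Pb (enl_space e c (Suc t)) (concat_path t wb)"

definition Xproc :: "'d \<Rightarrow> (nat \<Rightarrow> (nat \<Rightarrow> 'w) \<Rightarrow> (real ^ 'd) set) \<Rightarrow> (nat \<Rightarrow> (nat \<Rightarrow> 'w) \<Rightarrow> real ^ 'd)
    \<Rightarrow> nat \<Rightarrow> (nat \<Rightarrow> 'w) \<times> (nat \<Rightarrow> real ^ 'd) \<Rightarrow> real ^ 'd" where
  "Xproc e K S t wb = closest_point (Kstar0 e (K t (fst wb)))
      (\<chi> i. S t (fst wb) $ i * snd wb t $ i)"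

definition Pbar :: "'d \<Rightarrow> real \<Rightarrow> (nat \<Rightarrow> (nat \<Rightarrow> 'w::topological_space) \<Rightarrow> 'w measure set)
    \<Rightarrow> nat \<Rightarrow> (nat \<Rightarrow> 'w) \<times> (nat \<Rightarrow> real ^ 'd) \<Rightarrow> ('w \<times> (real ^ 'd)) measure set" where
  "Pbar e c P t wb = {Pb \<in> space (prob_algebra (step_space e c)). distr Pb borel fst \<in> P t (fst wb)}"

definition Pbar_int :: "'d \<Rightarrow> real \<Rightarrow> (nat \<Rightarrow> (nat \<Rightarrow> 'w::topological_space) \<Rightarrow> (real ^ 'd) set)
    \<Rightarrow> (nat \<Rightarrow> (nat \<Rightarrow> 'w) \<Rightarrow> real ^ 'd) \<Rightarrow> (nat \<Rightarrow> (nat \<Rightarrow> 'w) \<Rightarrow> 'w measure set)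
    \<Rightarrow> nat \<Rightarrow> (nat \<Rightarrow> 'w) \<times> (nat \<Rightarrow> real ^ 'd) \<Rightarrow> ('w \<times> (real ^ 'd)) measure set" where
  "Pbar_int e c K S P t wb = {Pb \<in> Pbar e c P t wb.
     emeasure (dirac_prod e c t wb Pb)
       {x \<in> space (enl_space e c (Suc t)).
          Xproc e K S (Suc t) x \<in> interior (dual_cone (K (Suc t) (fst x)))} = 1}"

end

theory Submission
  imports Defs
begin

text \<open>The graph of \<open>Pbar_int\<close> is the preimage of the graph of \<open>P t\<close> under the measurable
  map \<open>(\<omega>bar, Pbar) \<mapsto> (\<omega>, first marginal of Pbar)\<close>, cut down to the set of pairs for which
  \<open>Pbar\<close> gives mass one to the \<open>\<omega>bar\<close>-section of the event \<open>{X (t+1) \<in> int K* (t+1)}\<close>.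
  By the measurability of the evaluation maps of the Giry monad that set is measurable, and
  analytic sets are stable under measurable preimages intersected with measurable sets.\<close>

lemma analytic_set_empty: "analytic_set M {}"
  unfolding analytic_set_def by (intro bexI[of _ "{}"]) auto

lemma analytic_set_measurable_vimage:
  assumes f: "f \<in> M \<rightarrow>\<^sub>M N" and A: "analytic_set N A" and C: "C \<in> sets M"
  shows "analytic_set M {x \<in> C. f x \<in> A}"
proof -
  obtain B where B: "B \<in> sets (N \<Otimes>\<^sub>M baire_measure)" and A_eq: "A = fst ` B"
    using A unfolding analytic_set_def by blast
  define B' where "B' = {q \<in> space (M \<Otimes>\<^sub>M baire_measure). (f (fst q), snd q) \<in> B \<and> fst q \<in> C}"
  have "B' = ((\<lambda>q. (f (fst q), snd q)) -` B \<inter> space (M \<Otimes>\<^sub>M baire_measure))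
      \<inter> (fst -` C \<inter> space (M \<Otimes>\<^sub>M baire_measure))"
    unfolding B'_def by auto
  also have "\<dots> \<in> sets (M \<Otimes>\<^sub>M baire_measure)"
    using f B C by measurable
  finally have B': "B' \<in> sets (M \<Otimes>\<^sub>M baire_measure)" .
  have "{x \<in> C. f x \<in> A} = fst ` B'"
  proof (intro equalityI subsetI)
    fix x assume "x \<in> {x \<in> C. f x \<in> A}"
    then obtain y where x: "x \<in> C" and y: "(f x, y) \<in> B"
      unfolding A_eq by force
    have "y \<in> space baire_measure"
      using sets.sets_into_space[OF B] y by (auto simp: space_pair_measure)
    moreover have "x \<in> space M"
      using sets.sets_into_space[OF C] x by auto
    ultimately have "(x, y) \<in> B'"
      unfolding B'_def using x y by (auto simp: space_pair_measure)
    then show "x \<in> fst ` B'" by force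
  next
    fix x assume "x \<in> fst ` B'"
    then show "x \<in> {x \<in> C. f x \<in> A}"
      unfolding B'_def A_eq by force
  qed
  then show ?thesis
    unfolding analytic_set_def using B' by blast
qed

lemma measurable_emeasure_section:
  assumes h: "h \<in> M \<Otimes>\<^sub>M N \<rightarrow>\<^sub>M L" and E: "E \<in> sets L"
    and \<kappa>: "\<kappa> \<in> M \<rightarrow>\<^sub>M subprob_algebra N"
  shows "(\<lambda>x. emeasure (\<kappa> x) ((\<lambda>y. h (x, y)) -` E \<inter> space N)) \<in> borel_measurable M"
proof -
  have "(SIGMA x:space M. (\<lambda>y. h (x, y)) -` E \<inter> space N) = h -` E \<inter> space (M \<Otimes>\<^sub>M N)"
    by (auto simp: space_pair_measure)
  also have "\<dots> \<in> sets (M \<Otimes>\<^sub>M N)"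
    using measurable_sets[OF h E] .
  finally show ?thesis
    by (rule emeasure_measurable_subprob_algebra2[OF _ \<kappa>])
qed

lemma measurable_concat_path:
  "case_prod (concat_path t) \<in> enl_space e c t \<Otimes>\<^sub>M step_space e c
     \<rightarrow>\<^sub>M (enl_space e c (Suc t) :: ((nat \<Rightarrow> 'w::topological_space) \<times> (nat \<Rightarrow> real ^ 'd)) measure)"
proof -
  let ?M = "enl_space e c t \<Otimes>\<^sub>M (step_space e c :: ('w \<times> (real ^ 'd)) measure)"
  have path: "(\<lambda>x. (fst (fst x))(Suc t := fst (snd x))) \<in> ?M \<rightarrow>\<^sub>M (path_space (Suc t) :: (nat \<Rightarrow> 'w) measure)"
    unfolding path_space_def
  proof (rule measurable_PiM_single')
    fix i assume "i \<in> {1..Suc t}"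
    then consider "i = Suc t" | "i \<noteq> Suc t" "i \<in> {1..t}" by fastforce
    then show "(\<lambda>x. ((fst (fst x))(Suc t := fst (snd x))) i) \<in> ?M \<rightarrow>\<^sub>M borel"
      by cases (simp_all add: enl_space_def step_space_def path_space_def)
  qed (auto simp: enl_space_def step_space_def path_space_def space_pair_measure space_PiM PiE_def extensional_def)
  have theta: "(\<lambda>x. (snd (fst x))(Suc t := snd (snd x))) \<in> ?M \<rightarrow>\<^sub>M PiM {0..Suc t} (\<lambda>_. Lambda_measure e c)"
  proof (rule measurable_PiM_single')
    fix i assume "i \<in> {0..Suc t}"
    then consider "i = Suc t" | "i \<noteq> Suc t" "i \<in> {0..t}" by fastforce
    then show "(\<lambda>x. ((snd (fst x))(Suc t := snd (snd x))) i) \<in> ?M \<rightarrow>\<^sub>M Lambda_measure e c"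
      by cases (simp_all add: enl_space_def step_space_def)
  qed (auto simp: enl_space_def step_space_def space_pair_measure space_PiM PiE_def extensional_def Pi_def)
  have "(\<lambda>x. ((fst (fst x))(Suc t := fst (snd x)), (snd (fst x))(Suc t := snd (snd x)))) \<in> ?M \<rightarrow>\<^sub>M enl_space e c (Suc t)"
    unfolding enl_space_def[of e c "Suc t"] using path theta by (rule measurable_Pair)
  then show ?thesis
    by (simp add: concat_path_def case_prod_beta')
qed

lemma emeasure_dirac_prod:
  assumes wb: "wb \<in> space (enl_space e c t)"
    and Pb: "Pb \<in> space (prob_algebra (step_space e c))"
    and E: "E \<in> sets (enl_space e c (Suc t))"
  shows "emeasure (dirac_prod e c t wb Pb) E = emeasure Pb (concat_path t wb -` E \<inter> space (step_space e c))"
proof -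
  have sets_Pb: "sets Pb = sets (step_space e c)"
    using Pb by (simp add: space_prob_algebra)
  have "concat_path t wb \<in> step_space e c \<rightarrow>\<^sub>M enl_space e c (Suc t)"
    using measurable_Pair2[OF measurable_concat_path wb] by simp
  then have "concat_path t wb \<in> Pb \<rightarrow>\<^sub>M enl_space e c (Suc t)"
    by (simp add: measurable_cong_sets[OF sets_Pb refl])
  then show ?thesis
    unfolding dirac_prod_def using E sets_eq_imp_space_eq[OF sets_Pb]
    by (simp add: emeasure_distr)
qed

lemma measurable_marginal:
  "(\<lambda>(wb, Pb). (fst wb, distr Pb borel fst))
     \<in> enl_space e c t \<Otimes>\<^sub>M prob_algebra (step_space e c :: ('w::topological_space \<times> (real ^ 'd)) measure)
       \<rightarrow>\<^sub>M (path_space t :: (nat \<Rightarrow> 'w) measure) \<Otimes>\<^sub>M prob_algebra borel"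
proof -
  have marginal: "(\<lambda>Pb. distr Pb (borel :: 'w measure) fst) \<in> prob_algebra (step_space e c :: ('w \<times> (real ^ 'd)) measure) \<rightarrow>\<^sub>M prob_algebra borel"
    unfolding step_space_def by (rule measurable_distr_prob_space) simp
  have path: "fst \<in> enl_space e c t \<rightarrow>\<^sub>M (path_space t :: (nat \<Rightarrow> 'w) measure)"
    unfolding enl_space_def by simp
  show ?thesis
    unfolding case_prod_beta'
    using path marginal by measurable
qed

lemma sets_concat_path_prob_one:
  assumes E: "E \<in> sets (enl_space e c (Suc t))"
  shows "{p \<in> space (enl_space e c t \<Otimes>\<^sub>M prob_algebra (step_space e c)).
      emeasure (snd p) (concat_path t (fst p) -` E \<inter> space (step_space e c)) = 1}
    \<in> sets (enl_space e c t \<Otimes>\<^sub>M prob_algebra (step_space e c :: ('w::topological_space \<times> (real ^ 'd)) measure))"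
proof -
  let ?M = "enl_space e c t \<Otimes>\<^sub>M prob_algebra (step_space e c :: ('w \<times> (real ^ 'd)) measure)"
  have concat: "(\<lambda>(p, z). concat_path t (fst p) z) \<in> ?M \<Otimes>\<^sub>M step_space e c \<rightarrow>\<^sub>M enl_space e c (Suc t)"
    using measurable_concat_path by measurable
  have kernel: "snd \<in> ?M \<rightarrow>\<^sub>M subprob_algebra (step_space e c)"
    by (intro measurable_prob_algebraD) simp
  have [measurable]: "(\<lambda>p. emeasure (snd p) (concat_path t (fst p) -` E \<inter> space (step_space e c)))
      \<in> borel_measurable ?M"
    using measurable_emeasure_section[OF concat E kernel] by simp
  show ?thesis
    by measurable
qed

theorem mainTheorem2:
  fixes T :: nat and c :: real and e :: "'d::finite"
    and P :: "nat \<Rightarrow> (nat \<Rightarrow> 'w::polish_space) \<Rightarrow> 'w measure set"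
    and K :: "nat \<Rightarrow> (nat \<Rightarrow> 'w) \<Rightarrow> (real ^ 'd) set"
    and S :: "nat \<Rightarrow> (nat \<Rightarrow> 'w) \<Rightarrow> real ^ 'd"
  assumes T_pos: "T \<ge> 1"
    and d_ge2: "CARD('d) \<ge> 2"
    and P_conv: "\<forall>t<T. \<forall>\<omega>\<in>space (path_space t).
        P t \<omega> \<noteq> {} \<and> P t \<omega> \<subseteq> space (prob_algebra (borel :: 'w measure)) \<and>
        (\<forall>Q1\<in>P t \<omega>. \<forall>Q2\<in>P t \<omega>. \<forall>l\<in>{0..1}. mix_measure l Q1 Q2 \<in> P t \<omega>)"
    and P_analytic: "\<forall>t<T. analytic_set (path_space t \<Otimes>\<^sub>M prob_algebra (borel :: 'w measure))
        {(\<omega>, Q). \<omega> \<in> space (path_space t) \<and> Q \<in> P t \<omega>}"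
    and K_meas: "\<forall>t\<le>T. effros_measurable (path_space t) (K t)"
    and K_cone: "\<forall>t\<le>T. \<forall>\<omega>\<in>space (path_space t).
        closed (K t \<omega>) \<and> convex_cone (K t \<omega>) \<and> nonneg_orthant \<subseteq> K t \<omega> \<and>
        dual_cone (K t \<omega>) \<inter> frontier nonneg_orthant = {0} \<and>
        interior (dual_cone (K t \<omega>)) \<noteq> {}"
    and S_adapted: "\<forall>t\<le>T. S t \<in> borel_measurable (path_space t)"
    and S_in: "\<forall>t\<le>T. \<forall>\<omega>\<in>space (path_space t).
        S t \<omega> \<in> Kstar0 e (K t \<omega>) \<inter> interior (dual_cone (K t \<omega>))"
    and c_gt1: "c > 1"
    and c_bound: "\<forall>t\<le>T. \<forall>\<omega>\<in>space (path_space t). \<forall>y\<in>Kstar0 e (K t \<omega>). \<forall>i. i \<noteq> e \<longrightarrow>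
        S t \<omega> $ i / c \<le> y $ i \<and> y $ i \<le> c * S t \<omega> $ i"
  shows "\<forall>t<T. analytic_set (enl_space e c t \<Otimes>\<^sub>M prob_algebra (step_space e c :: ('w \<times> (real ^ 'd)) measure))
        {(wb, Pb). wb \<in> space (enl_space e c t) \<and> Pb \<in> Pbar_int e c K S P t wb}"
proof (intro allI impI)
  fix t assume "t < T"
  let ?\<Omega> = "enl_space e c t :: ((nat \<Rightarrow> 'w) \<times> (nat \<Rightarrow> real ^ 'd)) measure"
  let ?Step = "step_space e c :: ('w \<times> (real ^ 'd)) measure"
  let ?E = "{x \<in> space (enl_space e c (Suc t)). Xproc e K S (Suc t) x \<in> interior (dual_cone (K (Suc t) (fst x)))}"
  let ?G = "{(wb, Pb). wb \<in> space ?\<Omega> \<and> Pb \<in> Pbar_int e c K S P t wb}"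
  show "analytic_set (?\<Omega> \<Otimes>\<^sub>M prob_algebra ?Step) ?G"
  proof (cases "?E \<in> sets (enl_space e c (Suc t))")
    case False
    \<comment> \<open>a non-measurable event has measure \<open>0\<close> under every \<open>dirac_prod\<close>, so the graph is empty\<close>
    then have "?G = {}"
      by (auto simp: Pbar_int_def dirac_prod_def emeasure_notin_sets)
    then show ?thesis
      by (metis analytic_set_empty)
  next
    case True
    let ?C = "{p \<in> space (?\<Omega> \<Otimes>\<^sub>M prob_algebra ?Step).
      emeasure (snd p) (concat_path t (fst p) -` ?E \<inter> space ?Step) = 1}"
    have graph_eq: "?G = {p \<in> ?C. (\<lambda>(wb, Pb). (fst wb, distr Pb borel fst)) p
        \<in> {(\<omega>, Q). \<omega> \<in> space (path_space t) \<and> Q \<in> P t \<omega>}}"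
      using True
      by (auto simp: Pbar_int_def Pbar_def emeasure_dirac_prod space_pair_measure enl_space_def)
    show ?thesis
      unfolding graph_eq
      by (rule analytic_set_measurable_vimage[OF measurable_marginal
            P_analytic[rule_format, OF \<open>t < T\<close>] sets_concat_path_prob_one[OF True]])
  qed
qed

end
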